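(* Let $\mathcal{L}$ be a lineage with hierarchical generator $\mathcal{H}$. Then (i) for every $\psi\in\mathcal{L}$, $\psi\in\operatorname{span}(\mathcal{H}\cap\mathrm{desc}(\psi))$, where $\mathrm{desc}(\psi)=\bigcup_{k\ge1}\mathrm{ch}^k(\psi)$; (ii) for every $\ell\in\mathbb{Z}_{\ge0}$ and $k\in\mathbb{Z}^+$, $\mathcal{H}^{\ell+k}\subset\mathrm{ch}^k(\mathcal{L}^\ell)$.
   Context: Fix integers $d\ge1$, $n\ge2$, $m\ge2$; $s=n-1$, $p=m-1$. B-splines $\varphi^\ell_{\vec i}(\vec x)=\prod_kQ(n^\ell x_k-i_k)$ on $\mathbb{R}^d$ for $\ell\in\mathbb{Z}_{\ge0}$, $\vec i\in\mathbb{Z}^d$, $Q$ the uniform B-spline of order $m$ with knots $0,\dots,m$; $\mathfrak{B}$ the set of all of them, $\ell_\varphi$ the level. $\mathcal{B}^0=\{\varphi^0_{\vec i}:\vec i\in[-p:0]^d\}$. Children $\mathrm{ch}(\varphi^\ell_{\vec i})=\{\varphi^{\ell+1}_{\vec k}:n\vec i\le\vec k\le n\vec i+sm\}$ (componentwise), extended to sets by union, $\mathrm{ch}^k$ its $k$-fold application; each $\varphi^\ell_{\vec i}$ is a linear combination with positive coefficients of its children. A lineage is a finite $\mathcal{L}\subset\mathfrak{B}$ with $\mathcal{L}\subset\mathcal{B}^0\cup\mathrm{ch}(\mathcal{L})$; its hierarchical generator is $\mathcal{H}=(\mathcal{B}^0\cup\mathrm{ch}(\mathcal{L}))\setminus\mathcal{L}$.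 For a set $\mathcal{F}\subset\mathfrak{B}$, $\mathcal{F}^\ell$ denotes its elements of level $\ell$. *)

theory Defs
  imports "HOL-Analysis.Analysis"
begin

text \<open>Uniform (cardinal) B-spline of order m with knots 0,...,m (valid for m \<ge> 2):
  Q(x) = 1/(m-1)! * sum_{j=0}^{m} (-1)^j binom(m,j) (x-j)_+^{m-1}.\<close>
definition Qspl :: "nat \<Rightarrow> real \<Rightarrow> real" where
  "Qspl m x = (\<Sum>j = 0..m. (-1) ^ j * real (m choose j) * (max 0 (x - real j)) ^ (m - 1))
              / fact (m - 1)"

text \<open>A B-spline is identified by its index (level l, translation vector i \<in> Z^d).
  The map from indices to functions is injective, so sets of B-splines are
  represented by sets of indices.\<close>
type_synonym 'd bidx = "nat \<times> (int ^ 'd)"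

definition bspl :: "nat \<Rightarrow> nat \<Rightarrow> 'd::finite bidx \<Rightarrow> real ^ 'd \<Rightarrow> real" where
  "bspl n m \<phi> x = (\<Prod>k\<in>UNIV. Qspl m (real n ^ fst \<phi> * x $ k - real_of_int (snd \<phi> $ k)))"

definition B0 :: "nat \<Rightarrow> 'd::finite bidx set" where
  "B0 m = {(0, i) | i. \<forall>k. - (int m - 1) \<le> i $ k \<and> i $ k \<le> 0}"

definition ch :: "nat \<Rightarrow> nat \<Rightarrow> 'd::finite bidx \<Rightarrow> 'd bidx set" where
  "ch n m \<phi> = {(fst \<phi> + 1, k) | k. \<forall>j. int n * snd \<phi> $ j \<le> k $ j
                  \<and> k $ j \<le> int n * snd \<phi> $ j + (int n - 1) * int m}"

definition chS :: "nat \<Rightarrow> nat \<Rightarrow> 'd::finite bidx set \<Rightarrow> 'd bidx set" where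
  "chS n m S = (\<Union>\<phi>\<in>S. ch n m \<phi>)"

definition chk :: "nat \<Rightarrow> nat \<Rightarrow> nat \<Rightarrow> 'd::finite bidx set \<Rightarrow> 'd bidx set" where
  "chk n m k S = ((chS n m) ^^ k) S"

definition desc :: "nat \<Rightarrow> nat \<Rightarrow> 'd::finite bidx \<Rightarrow> 'd bidx set" where
  "desc n m \<psi> = (\<Union>k\<in>{1..}. chk n m k {\<psi>})"

definition lineage :: "nat \<Rightarrow> nat \<Rightarrow> 'd::finite bidx set \<Rightarrow> bool" where
  "lineage n m L \<longleftrightarrow> finite L \<and> L \<subseteq> B0 m \<union> chS n m L"

definition hgen :: "nat \<Rightarrow> nat \<Rightarrow> 'd::finite bidx set \<Rightarrow> 'd bidx set" where
  "hgen n m L = (B0 m \<union> chS n m L) - L"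

definition lev :: "'d::finite bidx set \<Rightarrow> nat \<Rightarrow> 'd bidx set" where
  "lev F l = {\<phi> \<in> F. fst \<phi> = l}"

definition fspan :: "('a \<Rightarrow> real) set \<Rightarrow> ('a \<Rightarrow> real) set" where
  "fspan S = {f. \<exists>T c. finite T \<and> T \<subseteq> S \<and> f = (\<lambda>x. \<Sum>g\<in>T. c g * g x)}"

end

theory Submission
  imports Defs "HOL-Computational_Algebra.Polynomial"
begin

text \<open>The uniform B-spline Q is the normalised m-th difference of the truncated power
  y_+^(m-1). Taking the differences with step 1/n instead and factoring
  (1 - z^n)^m = (1 - z)^m (1 + z + ... + z^(n-1))^m gives the refinement equation
  Q(x) = n^(1-m) \<Sum>_j a_j Q(nx - j), where a_j are the coefficients of (1 + ... + z^(n-1))^m;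
  its shifts j range over exactly the children. Tensorising, every B-spline lies in the span of
  its children. Part (i) follows by induction downwards from the top level of the finite
  lineage: each child is either in the generator (and a descendant) or in the lineage, where
  induction applies. Part (ii) holds because an element of positive level of B^0 \<union> ch(L) is a
  child of an element of L one level lower, which again lies in B^0 \<union> ch(L).\<close>

section \<open>Pairing polynomials with sequences\<close>

text \<open>Pairing g with a polynomial p applies to g the difference operator with symbol p;
  by coeff_pairing_mult, composing such operators multiplies their symbols.\<close>

definition coeff_pairing :: "(nat \<Rightarrow> real) \<Rightarrow> real poly \<Rightarrow> real" where
  "coeff_pairing g p = (\<Sum>k\<le>degree p. coeff p k * g k)"

lemma coeff_pairing_eq_sum_lessThan:
  "degree p < N \<Longrightarrow> coeff_pairing g p = (\<Sum>k<N. coeff p k * g k)"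
  unfolding coeff_pairing_def
  by (rule sum.mono_neutral_left) (auto simp: coeff_eq_0)

lemma coeff_pairing_0 [simp]: "coeff_pairing g 0 = 0"
  by (simp add: coeff_pairing_def)

lemma coeff_pairing_add: "coeff_pairing g (p + q) = coeff_pairing g p + coeff_pairing g q"
proof -
  define N where "N = Suc (max (degree p) (degree q))"
  have "degree (p + q) < N"
    unfolding N_def using degree_add_le_max[of p q] by linarith
  then show ?thesis
    using coeff_pairing_eq_sum_lessThan[of "p + q" N] coeff_pairing_eq_sum_lessThan[of p N]
      coeff_pairing_eq_sum_lessThan[of q N]
    by (simp add: N_def sum.distrib algebra_simps less_Suc_eq_le)
qed

lemma coeff_pairing_smult: "coeff_pairing g (smult a p) = a * coeff_pairing g p"
  using coeff_pairing_eq_sum_lessThan[of "smult a p" "Suc (degree p)" g]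
    coeff_pairing_eq_sum_lessThan[of p "Suc (degree p)" g]
  by (simp add: sum_distrib_left mult.assoc degree_smult_le le_imp_less_Suc
      del: sum.lessThan_Suc)

lemma coeff_pairing_pCons:
  "coeff_pairing g (pCons a p) = a * g 0 + coeff_pairing (\<lambda>k. g (Suc k)) p"
proof -
  have "coeff_pairing g (pCons a p) = (\<Sum>k<Suc (Suc (degree p)). coeff (pCons a p) k * g k)"
    by (rule coeff_pairing_eq_sum_lessThan) (simp add: degree_pCons_le le_imp_less_Suc)
  also have "\<dots> = a * g 0 + (\<Sum>k<Suc (degree p). coeff p k * g (Suc k))"
    by (subst sum.lessThan_Suc_shift) simp
  also have "\<dots> = a * g 0 + coeff_pairing (\<lambda>k. g (Suc k)) p"
    by (subst coeff_pairing_eq_sum_lessThan[of p]) auto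
  finally show ?thesis .
qed

lemma coeff_pairing_mult:
  "coeff_pairing g (p * q) = coeff_pairing (\<lambda>j. coeff_pairing (\<lambda>i. g (i + j)) q) p"
proof (induction p arbitrary: g)
  case (pCons a p)
  have "coeff_pairing g (pCons a p * q)
      = a * coeff_pairing g q + coeff_pairing (\<lambda>k. g (Suc k)) (p * q)"
    by (simp add: coeff_pairing_add coeff_pairing_smult coeff_pairing_pCons)
  also have "\<dots> = a * coeff_pairing g q
      + coeff_pairing (\<lambda>j. coeff_pairing (\<lambda>i. g (Suc (i + j))) q) p"
    using pCons.IH[of "\<lambda>k. g (Suc k)"] by simp
  also have "\<dots> = coeff_pairing (\<lambda>j. coeff_pairing (\<lambda>i. g (i + j)) q) (pCons a p)"
    by (simp add: coeff_pairing_pCons)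
  finally show ?case .
qed simp

lemma coeff_pairing_monom: "coeff_pairing g (monom a k) = a * g k"
  using coeff_pairing_eq_sum_lessThan[of "monom a k" "Suc k" g]
  by (simp add: degree_monom_le le_imp_less_Suc coeff_monom if_distrib sum.delta cong: if_cong)

lemma coeff_pairing_sum: "coeff_pairing g (\<Sum>i\<in>I. f i) = (\<Sum>i\<in>I. coeff_pairing g (f i))"
  by (induction I rule: infinite_finite_induct) (auto simp: coeff_pairing_add)

lemma one_minus_monom_power:
  "(1 - monom (1::real) r) ^ m = (\<Sum>i\<le>m. monom ((-1) ^ i * real (m choose i)) (r * i))"
proof -
  have "(1 - monom (1::real) r) ^ m = (monom (-1) r + 1) ^ m"
    by (simp add: monom_altdef algebra_simps)
  also have "\<dots> = (\<Sum>i\<le>m. of_nat (m choose i) * monom (-1) r ^ i * 1 ^ (m - i))"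
    by (rule binomial_ring)
  also have "\<dots> = (\<Sum>i\<le>m. monom ((-1) ^ i * real (m choose i)) (r * i))"
    by (rule sum.cong) (auto simp: monom_power of_nat_poly smult_monom mult.commute)
  finally show ?thesis .
qed

lemma coeff_pairing_one_minus_monom_power:
  "coeff_pairing g ((1 - monom 1 r) ^ m) = (\<Sum>i\<le>m. (-1) ^ i * real (m choose i) * g (r * i))"
  by (simp add: one_minus_monom_power coeff_pairing_sum coeff_pairing_monom)

section \<open>The refinement equation\<close>

definition trunc_power :: "nat \<Rightarrow> real \<Rightarrow> real" where
  "trunc_power m y = max 0 y ^ (m - 1)"

lemma Qspl_eq_trunc_power_differences:
  "Qspl m x = (\<Sum>j\<le>m. (-1) ^ j * real (m choose j) * trunc_power m (x - real j)) / fact (m - 1)"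
  by (simp add: Qspl_def trunc_power_def atLeast0AtMost)

lemma trunc_power_scale: "c > 0 \<Longrightarrow> trunc_power m (c * y) = c ^ (m - 1) * trunc_power m y"
proof -
  assume "c > 0"
  then have "max 0 (c * y) = c * max 0 y"
    by (cases "y \<ge> 0") (simp_all add: max_def mult_pos_neg less_imp_le not_le)
  then show ?thesis
    by (simp add: trunc_power_def power_mult_distrib)
qed

definition geom_poly :: "nat \<Rightarrow> real poly" where
  "geom_poly n = (\<Sum>j<n. monom 1 j)"

lemma one_minus_monom_factor: "1 - monom (1::real) n = (1 - monom 1 1) * geom_poly n"
  using one_diff_power_eq[of "monom (1::real) 1" n] by (simp add: geom_poly_def monom_power)

lemma degree_geom_poly_power: "degree (geom_poly n ^ m) \<le> (n - 1) * m"
proof -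
  have "degree (geom_poly n) \<le> n - 1"
    unfolding geom_poly_def
    by (rule degree_sum_le) (auto intro: order.trans[OF degree_monom_le])
  then show ?thesis
    using degree_power_le[of "geom_poly n" m] by (metis le_trans mult_le_mono1)
qed

definition refine_coeff :: "nat \<Rightarrow> nat \<Rightarrow> nat \<Rightarrow> real" where
  "refine_coeff n m j = coeff (geom_poly n ^ m) j / real n ^ (m - 1)"

lemma coeff_pairing_scaled_difference:
  assumes "n \<ge> 1"
  shows "coeff_pairing (\<lambda>i. trunc_power m (x - real (i + j) / real n)) ((1 - monom 1 1) ^ m)
           = fact (m - 1) / real n ^ (m - 1) * Qspl m (real n * x - real j)"
proof -
  have n_pos: "real n > 0"
    using assms by simp
  have scaled: "real n ^ (m - 1) * trunc_power m (x - real (i + j) / real n)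
      = trunc_power m (real n * x - real j - real i)" for i
  proof -
    have "real n * (x - real (i + j) / real n) = real n * x - real j - real i"
      using n_pos by (simp add: field_simps)
    then show ?thesis
      using trunc_power_scale[OF n_pos, of m "x - real (i + j) / real n"] by simp
  qed
  have "real n ^ (m - 1)
      * coeff_pairing (\<lambda>i. trunc_power m (x - real (i + j) / real n)) ((1 - monom 1 1) ^ m)
      = (\<Sum>i\<le>m. (-1) ^ i * real (m choose i)
           * (real n ^ (m - 1) * trunc_power m (x - real (i + j) / real n)))"
    by (simp add: coeff_pairing_one_minus_monom_power sum_distrib_left mult_ac)
  also have "\<dots> = (\<Sum>i\<le>m. (-1) ^ i * real (m choose i) * trunc_power m (real n * x - real j - real i))"
    by (simp only: scaled)
  also have "\<dots> = fact (m - 1) * Qspl m (real n * x - real j)"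
    by (simp add: Qspl_eq_trunc_power_differences)
  finally show ?thesis
    using n_pos by (simp add: field_simps)
qed

lemma Qspl_refinement:
  assumes "n \<ge> 1"
  shows "Qspl m x = (\<Sum>j\<le>(n - 1) * m. refine_coeff n m j * Qspl m (real n * x - real j))"
proof -
  define g where "g k = trunc_power m (x - real k / real n)" for k
  define h where "h j = coeff_pairing (\<lambda>i. g (i + j)) ((1 - monom 1 1) ^ m)" for j
  have g_multiple: "g (n * i) = trunc_power m (x - real i)" for i
    using assms by (simp add: g_def)
  have h_eq: "h j = fact (m - 1) / real n ^ (m - 1) * Qspl m (real n * x - real j)" for j
    unfolding h_def g_def by (rule coeff_pairing_scaled_difference[OF assms])
  have "fact (m - 1) * Qspl m x = (\<Sum>i\<le>m. (-1) ^ i * real (m choose i) * trunc_power m (x - real i))"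
    by (simp add: Qspl_eq_trunc_power_differences)
  also have "\<dots> = (\<Sum>i\<le>m. (-1) ^ i * real (m choose i) * g (n * i))"
    by (simp only: g_multiple)
  also have "\<dots> = coeff_pairing g ((1 - monom 1 n) ^ m)"
    by (rule coeff_pairing_one_minus_monom_power[of g n m, symmetric])
  also have "\<dots> = coeff_pairing g (geom_poly n ^ m * (1 - monom 1 1) ^ m)"
    by (subst one_minus_monom_factor) (simp only: power_mult_distrib mult.commute)
  also have "\<dots> = coeff_pairing h (geom_poly n ^ m)"
    by (simp add: coeff_pairing_mult h_def[abs_def])
  also have "\<dots> = (\<Sum>j\<le>(n - 1) * m. coeff (geom_poly n ^ m) j * h j)"
    using coeff_pairing_eq_sum_lessThan[OF le_imp_less_Suc[OF degree_geom_poly_power]]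
    by (simp add: lessThan_Suc_atMost)
  also have "\<dots> = fact (m - 1) * (\<Sum>j\<le>(n - 1) * m. refine_coeff n m j * Qspl m (real n * x - real j))"
    by (simp add: h_eq refine_coeff_def sum_distrib_left mult_ac)
  finally show ?thesis
    by simp
qed

lemma bspl_refinement:
  fixes n m l :: nat and i :: "int ^ 'd::finite"
  assumes "n \<ge> 1"
  defines "P \<equiv> PiE (UNIV :: 'd set) (\<lambda>_. {..(n - 1) * m})"
  shows "bspl n m (l, i) = (\<lambda>x. \<Sum>p\<in>P. (\<Prod>k\<in>UNIV. refine_coeff n m (p k))
           * bspl n m (Suc l, \<chi> k. int n * i $ k + int (p k)) x)"
proof
  fix x :: "real ^ 'd"
  define y where "y k = real n ^ l * x $ k - real_of_int (i $ k)" for k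
  have "bspl n m (l, i) x
      = (\<Prod>k\<in>UNIV. \<Sum>j\<le>(n - 1) * m. refine_coeff n m j * Qspl m (real n * y k - real j))"
    unfolding bspl_def y_def
    by (rule prod.cong[OF refl], subst Qspl_refinement[OF assms(1)]) (simp add: algebra_simps)
  also have "\<dots> = (\<Sum>p\<in>P. \<Prod>k\<in>UNIV. refine_coeff n m (p k) * Qspl m (real n * y k - real (p k)))"
    unfolding P_def by (rule prod_sum_PiE) auto
  also have "\<dots> = (\<Sum>p\<in>P. (\<Prod>k\<in>UNIV. refine_coeff n m (p k))
      * bspl n m (Suc l, \<chi> k. int n * i $ k + int (p k)) x)"
  proof (rule sum.cong[OF refl])
    fix p :: "'d \<Rightarrow> nat"
    have "(\<Prod>k\<in>UNIV. Qspl m (real n * y k - real (p k)))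
        = bspl n m (Suc l, \<chi> k. int n * i $ k + int (p k)) x"
      unfolding bspl_def y_def by (rule prod.cong) (simp_all add: algebra_simps)
    then show "(\<Prod>k\<in>UNIV. refine_coeff n m (p k) * Qspl m (real n * y k - real (p k)))
        = (\<Prod>k\<in>UNIV. refine_coeff n m (p k)) * bspl n m (Suc l, \<chi> k. int n * i $ k + int (p k)) x"
      by (simp add: prod.distrib)
  qed
  finally show "bspl n m (l, i) x = (\<Sum>p\<in>P. (\<Prod>k\<in>UNIV. refine_coeff n m (p k))
      * bspl n m (Suc l, \<chi> k. int n * i $ k + int (p k)) x)" .
qed

lemma fspan_zero: "(\<lambda>x. 0) \<in> fspan S"
  unfolding fspan_def by (rule CollectI, rule exI[of _ "{}"]) auto

lemma fspan_base: "f \<in> S \<Longrightarrow> f \<in> fspan S"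
  unfolding fspan_def by (rule CollectI, rule exI[of _ "{f}"], rule exI[of _ "\<lambda>_. 1"]) auto

lemma fspan_mono: "S \<subseteq> S' \<Longrightarrow> fspan S \<subseteq> fspan S'"
  unfolding fspan_def by blast

lemma fspan_scale_add:
  assumes "f \<in> fspan S" "g \<in> fspan S"
  shows "(\<lambda>x. a * f x + g x) \<in> fspan S"
proof -
  obtain T1 c1 where T1: "finite T1" "T1 \<subseteq> S" "f = (\<lambda>x. \<Sum>h\<in>T1. c1 h * h x)"
    using assms(1) unfolding fspan_def by blast
  obtain T2 c2 where T2: "finite T2" "T2 \<subseteq> S" "g = (\<lambda>x. \<Sum>h\<in>T2. c2 h * h x)"
    using assms(2) unfolding fspan_def by blast
  define c where "c h = a * (if h \<in> T1 then c1 h else 0) + (if h \<in> T2 then c2 h else 0)" for h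
  have "a * f x + g x = (\<Sum>h\<in>T1 \<union> T2. c h * h x)" for x
  proof -
    have "(\<Sum>h\<in>T1 \<union> T2. c h * h x) = a * (\<Sum>h\<in>T1 \<union> T2. if h \<in> T1 then c1 h * h x else 0)
       + (\<Sum>h\<in>T1 \<union> T2. if h \<in> T2 then c2 h * h x else 0)"
      unfolding c_def sum_distrib_left sum.distrib[symmetric]
      by (rule sum.cong) (auto simp: algebra_simps)
    also have "\<dots> = a * f x + g x"
      using T1 T2 sum.inter_restrict[of "T1 \<union> T2" "\<lambda>h. c1 h * h x" T1]
        sum.inter_restrict[of "T1 \<union> T2" "\<lambda>h. c2 h * h x" T2]
      by (simp add: Int_absorb1 Int_absorb2 Un_Int_eq)
    finally show ?thesis by simp
  qed
  then show ?thesis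
    unfolding fspan_def using T1 T2 by blast
qed

lemma fspan_sum:
  "finite I \<Longrightarrow> (\<And>i. i \<in> I \<Longrightarrow> f i \<in> fspan S) \<Longrightarrow> (\<lambda>x. \<Sum>i\<in>I. a i * f i x) \<in> fspan S"
proof (induction I rule: finite_induct)
  case (insert i I)
  then show ?case
    using fspan_scale_add[of "f i" S "\<lambda>x. \<Sum>i\<in>I. a i * f i x" "a i"] by simp
qed (simp add: fspan_zero)

lemma bspl_in_fspan_children:
  assumes "n \<ge> 1" and children: "\<And>c. c \<in> ch n m \<psi> \<Longrightarrow> bspl n m c \<in> fspan S"
  shows "bspl n m (\<psi> :: 'd::finite bidx) \<in> fspan S"
proof -
  obtain l i where \<psi>: "\<psi> = (l, i)"
    by (cases \<psi>)
  define P where "P = PiE (UNIV :: 'd set) (\<lambda>_. {..(n - 1) * m})"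
  have "(Suc l, \<chi> k. int n * i $ k + int (p k)) \<in> ch n m \<psi>" if "p \<in> P" for p
  proof -
    have "int (p k) \<le> (int n - 1) * int m" for k
    proof -
      have "p k \<le> (n - 1) * m"
        using PiE_mem[OF that[unfolded P_def], of k] by simp
      then have "int (p k) \<le> int ((n - 1) * m)"
        by (simp only: of_nat_le_iff)
      also have "\<dots> = (int n - 1) * int m"
        using assms(1) by (simp add: of_nat_diff)
      finally show ?thesis .
    qed
    then show ?thesis
      unfolding ch_def \<psi> by auto
  qed
  moreover have "finite P"
    unfolding P_def by (rule finite_PiE) auto
  ultimately show ?thesis
    unfolding \<psi> bspl_refinement[OF assms(1), of m l i] P_def[symmetric]
    by (intro fspan_sum) (auto intro: children[unfolded \<psi>])
qed

lemma fst_ch: "c \<in> ch n m \<psi> \<Longrightarrow> fst c = Suc (fst \<psi>)"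
  unfolding ch_def by auto

lemma fst_B0: "c \<in> B0 m \<Longrightarrow> fst c = 0"
  unfolding B0_def by auto

lemma chS_mono: "S \<subseteq> S' \<Longrightarrow> chS n m S \<subseteq> chS n m S'"
  unfolding chS_def by blast

lemma chS_singleton: "chS n m {\<psi>} = ch n m \<psi>"
  unfolding chS_def by simp

lemma chk_Suc: "chk n m (Suc k) S = chS n m (chk n m k S)"
  unfolding chk_def by simp

lemma chk_Suc_right: "chk n m (Suc k) S = chk n m k (chS n m S)"
  unfolding chk_def by (simp add: funpow_Suc_right del: funpow.simps)

lemma chk_mono: "S \<subseteq> S' \<Longrightarrow> chk n m k S \<subseteq> chk n m k S'"
  by (induction k) (simp_all add: chk_def chS_mono)

lemma ch_subset_desc: "ch n m \<psi> \<subseteq> desc n m \<psi>"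
  unfolding desc_def using chS_singleton[of n m \<psi>]
  by (intro subsetI UN_I[of 1]) (auto simp: chk_def)

lemma desc_ch_subset_desc:
  assumes "c \<in> ch n m \<psi>"
  shows "desc n m c \<subseteq> desc n m \<psi>"
proof
  fix x
  assume "x \<in> desc n m c"
  then obtain k where "k \<ge> 1" "x \<in> chk n m k {c}"
    unfolding desc_def by auto
  moreover have "chk n m k {c} \<subseteq> chk n m k (chS n m {\<psi>})"
    using assms by (intro chk_mono) (simp add: chS_singleton)
  ultimately have "x \<in> chk n m (Suc k) {\<psi>}"
    unfolding chk_Suc_right by blast
  then show "x \<in> desc n m \<psi>"
    unfolding desc_def by auto
qed

lemma bspl_in_fspan_hgen_desc:
  assumes "n \<ge> 1" and L: "lineage n m L" and "\<psi> \<in> L"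
  shows "bspl n m \<psi> \<in> fspan (bspl n m ` (hgen n m L \<inter> desc n m \<psi>))"
  using \<open>\<psi> \<in> L\<close>
proof (induction "Max (fst ` L) - fst \<psi>" arbitrary: \<psi> rule: less_induct)
  case less
  show ?case
  proof (rule bspl_in_fspan_children[OF \<open>n \<ge> 1\<close>])
    fix c
    assume c: "c \<in> ch n m \<psi>"
    show "bspl n m c \<in> fspan (bspl n m ` (hgen n m L \<inter> desc n m \<psi>))"
    proof (cases "c \<in> L")
      case True
      have "fst c \<le> Max (fst ` L)"
        using L True by (simp add: lineage_def)
      then have "Max (fst ` L) - fst c < Max (fst ` L) - fst \<psi>"
        using fst_ch[OF c] by simp
      then have "bspl n m c \<in> fspan (bspl n m ` (hgen n m L \<inter> desc n m c))"
        using less.hyps True by blast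
      also have "\<dots> \<subseteq> fspan (bspl n m ` (hgen n m L \<inter> desc n m \<psi>))"
        using desc_ch_subset_desc[OF c] by (intro fspan_mono) blast
      finally show ?thesis .
    next
      case False
      then have "c \<in> hgen n m L \<inter> desc n m \<psi>"
        using c less.prems ch_subset_desc unfolding hgen_def chS_def by blast
      then show ?thesis
        by (intro fspan_base) auto
    qed
  qed
qed

lemma lev_B0_chS_Suc:
  "lev (B0 m \<union> chS n m L) (Suc j) = chS n m (lev L j)"
proof
  show "lev (B0 m \<union> chS n m L) (Suc j) \<subseteq> chS n m (lev L j)"
  proof
    fix \<phi>
    assume "\<phi> \<in> lev (B0 m \<union> chS n m L) (Suc j)"
    then obtain \<psi> where \<psi>: "\<psi> \<in> L" "\<phi> \<in> ch n m \<psi>" and "fst \<phi> = Suc j"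
      unfolding lev_def chS_def by (auto dest: fst_B0)
    then have "\<psi> \<in> lev L j"
      using fst_ch[OF \<psi>(2)] unfolding lev_def by simp
    with \<psi>(2) show "\<phi> \<in> chS n m (lev L j)"
      unfolding chS_def by blast
  qed
qed (auto simp: lev_def chS_def dest: fst_ch)

lemma lev_B0_chS_subset_chk:
  assumes "L \<subseteq> B0 m \<union> chS n m L"
  shows "lev (B0 m \<union> chS n m L) (l + Suc k) \<subseteq> chk n m (Suc k) (lev L l)"
proof (induction k)
  case 0
  then show ?case
    by (simp add: lev_B0_chS_Suc chk_def)
next
  case (Suc k)
  have "lev L (l + Suc k) \<subseteq> lev (B0 m \<union> chS n m L) (l + Suc k)"
    using assms unfolding lev_def by blast
  with Suc.IH have IH: "lev L (l + Suc k) \<subseteq> chk n m (Suc k) (lev L l)"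
    by blast
  have "lev (B0 m \<union> chS n m L) (l + Suc (Suc k)) = chS n m (lev L (l + Suc k))"
    using lev_B0_chS_Suc[of m n L "l + Suc k"] by simp
  also have "\<dots> \<subseteq> chS n m (chk n m (Suc k) (lev L l))"
    using IH by (rule chS_mono)
  also have "\<dots> = chk n m (Suc (Suc k)) (lev L l)"
    by (rule chk_Suc[symmetric])
  finally show ?case .
qed

theorem lemma4p5:
  fixes n m :: nat and L :: "'d::finite bidx set"
  assumes "n \<ge> 2" and "m \<ge> 2" and "lineage n m L"
  shows "(\<forall>\<psi>\<in>L. bspl n m \<psi> \<in> fspan (bspl n m ` (hgen n m L \<inter> desc n m \<psi>)))
       \<and> (\<forall>l k. k \<ge> 1 \<longrightarrow> lev (hgen n m L) (l + k) \<subseteq> chk n m k (lev L l))"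
proof (intro conjI ballI allI impI)
  fix \<psi>
  assume "\<psi> \<in> L"
  then show "bspl n m \<psi> \<in> fspan (bspl n m ` (hgen n m L \<inter> desc n m \<psi>))"
    using assms by (intro bspl_in_fspan_hgen_desc) auto
next
  fix l k :: nat
  assume "k \<ge> 1"
  then obtain k' where k: "k = Suc k'"
    using not0_implies_Suc by fastforce
  have "lev (hgen n m L) (l + k) \<subseteq> lev (B0 m \<union> chS n m L) (l + Suc k')"
    unfolding hgen_def lev_def k by blast
  also have "\<dots> \<subseteq> chk n m k (lev L l)"
    using assms(3) unfolding k lineage_def by (intro lev_B0_chS_subset_chk) auto
  finally show "lev (hgen n m L) (l + k) \<subseteq> chk n m k (lev L l)" .
qed

end
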